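(* Let $n>k\geq1$, $r=n-k$, $2\leq h\leq n-k$, $k<d\leq n-h$, $\delta=\gcd(h,d-k)$, $s_0=\frac{d-k+\delta}{\delta}$, $s=\frac{d-k+h}{\delta}$, $\ell=s\cdot s_0^n$, and let $\mathcal{C}_3$ be the code defined over a finite field $F$ ($|F|\geq s_0n$, with $s_0n$ distinct elements $\lambda_{i,j}\in F$, $i\in[n]$, $j\in[0,s_0-1]$) by the parity check equations $\sum_{i=1}^n \lambda_{i,a_i}^{t-1} c_{i,(a,b)}=0$ for all $a\in[0,s_0^n-1]$, $b\in[0,s-1]$, $t\in[r]$. Let $\mathcal{H}\subseteq[n]$ with $|\mathcal{H}|=h$, let $\mathcal{R}\subseteq[n]\setminus\mathcal{H}$ with $|\mathcal{R}|=d$, and let $P_1,\ldots,P_{h/\delta}$ be a partition of $\mathcal{H}$ into disjoint subsets of size $\delta$. For $i\in[h/\delta]$ let $\Omega_i=\{0,1,\ldots,s_0-2,\,s_0-2+i\}$, and for $j\in[n]$, $a\in[0,s_0^n-1]$ define $$S^{(i)}_j(a)=\sum_{v=0}^{s_0-2}c_{j,(a(P_i,a|_{P_i}\oplus v\bm 1_\delta),\,v)}+c_{j,(a(P_i,a|_{P_i}\oplus(s_0-1)\bm 1_\delta),\,s_0-2+i)}.$$ Then for each $i\in[h/\delta]$ and every codeword of $\mathcal{C}_3$, the symbols $\{S^{(i)}_j(a): j\in\mathcal{R},\ a\in[0,s_0^n-1]\}$ determine both $\{c_{j,(a,b)}: j\in P_i,\ a\in[0,s_0^n-1],\ b\in\Omega_i\}$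 and $\{S^{(i)}_j(a): j\in\mathcal{H}\setminus P_i,\ a\in[0,s_0^n-1]\}$.
   Context: Notation: $[n]=\{1,\ldots,n\}$, $[i,j]=\{i,\ldots,j\}$. Each $\tau\in[0,\ell-1]$ is written uniquely as $\tau=b\cdot s_0^n+\sum_{i=1}^n a_i s_0^{i-1}$ with $b\in[0,s-1]$, $a_i\in[0,s_0-1]$; we write $a=(a_1,\ldots,a_n)$ and $\tau=(a,b)$, and $\bm c_i=(c_{i,0},\ldots,c_{i,\ell-1})\in F^\ell$ with $c_{i,(a,b)}=c_{i,\tau}$. For $\mathcal{X}\subseteq[n]$, $a|_{\mathcal{X}}$ denotes the vector of digits $(a_x)_{x\in\mathcal{X}}$, and for $\bm v\in[0,s_0-1]^{|\mathcal{X}|}$, $a(\mathcal{X},\bm v)$ is the integer whose digits on $\mathcal{X}$ equal $\bm v$ and whose other digits equal those of $a$. The operation $\oplus$ is digitwise addition modulo $s_0$, and $\bm 1_\delta$ is the all-one vector of length $\delta$. *)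

theory Defs
  imports Main
begin

definition digit :: "nat \<Rightarrow> nat \<Rightarrow> nat \<Rightarrow> nat" where
  "digit s0 a x = (a div s0 ^ (x - 1)) mod s0"

text \<open>shift_idx s0 n a P v = a(P, a|_P \<oplus> v 1_\<delta>): digits in P are increased by v mod s0,
  other digits are kept.\<close>
definition shift_idx :: "nat \<Rightarrow> nat \<Rightarrow> nat \<Rightarrow> nat set \<Rightarrow> nat \<Rightarrow> nat" where
  "shift_idx s0 n a P v =
     (\<Sum>x\<in>{1..n}. (if x \<in> P then (digit s0 a x + v) mod s0 else digit s0 a x) * s0 ^ (x - 1))"

text \<open>Codewords of C_3: c i a b = c_{i,(a,b)}, i \<in> [n], a \<in> [0,s0^n-1], b \<in> [0,s-1].\<close>
definition is_codeword_C3 ::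
  "nat \<Rightarrow> nat \<Rightarrow> nat \<Rightarrow> nat \<Rightarrow> (nat \<Rightarrow> nat \<Rightarrow> 'f::field) \<Rightarrow> (nat \<Rightarrow> nat \<Rightarrow> nat \<Rightarrow> 'f) \<Rightarrow> bool" where
  "is_codeword_C3 n r s0 s lam c \<longleftrightarrow>
     (\<forall>a < s0 ^ n. \<forall>b < s. \<forall>t \<in> {1..r}.
        (\<Sum>i\<in>{1..n}. (lam i (digit s0 a i)) ^ (t - 1) * c i a b) = 0)"

text \<open>The repair symbol S^{(i)}_j(a), with partition block P = P_i.\<close>
definition S_sym ::
  "nat \<Rightarrow> nat \<Rightarrow> nat set \<Rightarrow> nat \<Rightarrow> (nat \<Rightarrow> nat \<Rightarrow> nat \<Rightarrow> 'f::field) \<Rightarrow> nat \<Rightarrow> nat \<Rightarrow> 'f" where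
  "S_sym s0 n P i c j a =
     (\<Sum>v\<in>{0..s0 - 2}. c j (shift_idx s0 n a P v) v)
     + c j (shift_idx s0 n a P (s0 - 1)) (s0 - 2 + i)"

end

theory Submission
  imports Defs "HOL-Computational_Algebra.Polynomial" "HOL-Number_Theory.Cong"
begin

text \<open>Let \<open>e = c - c'\<close>, again a codeword, and fix an index \<open>a\<close>. Add up the parity checks of \<open>e\<close>
  at the \<open>s0\<close> indices \<open>a(P\<^sub>i, a|P\<^sub>i \<oplus> v 1)\<close>, \<open>v < s0\<close>, taken in the \<open>v\<close>-th column of \<open>\<Omega>\<^sub>i\<close>.
  A node \<open>j \<notin> P\<^sub>i\<close> sees the same evaluation point \<open>\<lambda>(j, a\<^sub>j)\<close> in all of them and contributes
  \<open>\<lambda>(j, a\<^sub>j)^(t-1) S\<^sub>j(a)\<close>, while a node \<open>j \<in> P\<^sub>i\<close> contributes \<open>s0\<close> terms at the distinct points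
  \<open>\<lambda>(j, (a\<^sub>j + v) mod s0)\<close>. The repair symbols of the \<open>d\<close> helper nodes in \<open>R\<close> vanish, which leaves
  \<open>(n - \<delta> - d) + \<delta> s0 = n - k = r\<close> unknowns at distinct points subject to \<open>r\<close> Vandermonde
  equations, so all of them vanish.\<close>

subsection \<open>Vandermonde systems\<close>

lemma power_sums_zero_imp_poly_sum_zero:
  fixes x y :: "'b \<Rightarrow> 'a::comm_ring_1"
  assumes sums: "\<forall>k<r. (\<Sum>u\<in>N. x u ^ k * y u) = 0" and deg: "degree p < r"
  shows "(\<Sum>u\<in>N. poly p (x u) * y u) = 0"
proof -
  have "(\<Sum>u\<in>N. poly p (x u) * y u) = (\<Sum>k\<le>degree p. coeff p k * (\<Sum>u\<in>N. x u ^ k * y u))"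
    by (simp add: poly_altdef sum_distrib_left sum_distrib_right mult.assoc sum.swap[of _ N])
  also have "\<dots> = 0"
    using sums deg by (intro sum.neutral) auto
  finally show ?thesis .
qed

lemma power_sums_zero_imp_zero:
  fixes x y :: "'b \<Rightarrow> 'f::field"
  assumes fin: "finite N" and card: "card N \<le> r" and inj: "inj_on x N"
    and sums: "\<forall>k<r. (\<Sum>u\<in>N. x u ^ k * y u) = 0" and u0: "u0 \<in> N"
  shows "y u0 = 0"
proof -
  define p where "p = (\<Prod>w\<in>N - {u0}. [:- x w, 1:])"
  have poly_p: "poly p z = (\<Prod>w\<in>N - {u0}. z - x w)" for z
    unfolding p_def poly_prod by simp
  have "degree p \<le> card (N - {u0})"
    unfolding p_def using degree_prod_sum_le[of "N - {u0}" "\<lambda>w. [:- x w, 1:]"] fin by simp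
  also have "\<dots> < card N"
    using fin u0 by (rule card_Diff1_less)
  finally have deg: "degree p < r" using card by simp
  have "(\<Sum>u\<in>N. poly p (x u) * y u) = poly p (x u0) * y u0"
    using fin u0 by (subst sum.mono_neutral_right[of N "{u0}"]) (auto simp: poly_p intro: prod_zero)
  then have "poly p (x u0) * y u0 = 0"
    using power_sums_zero_imp_poly_sum_zero[OF sums deg] by simp
  moreover have "poly p (x u0) \<noteq> 0"
    using fin inj u0 by (auto simp: poly_p inj_on_def)
  ultimately show ?thesis by simp
qed

subsection \<open>Base-\<open>s0\<close> digits\<close>

definition from_digits :: "nat \<Rightarrow> nat \<Rightarrow> (nat \<Rightarrow> nat) \<Rightarrow> nat" where
  "from_digits s0 n f = (\<Sum>x\<in>{1..n}. f x * s0 ^ (x - 1))"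

lemma from_digits_Suc:
  "from_digits s0 (Suc n) f = f 1 + s0 * from_digits s0 n (\<lambda>x. f (Suc x))"
proof -
  have "from_digits s0 (Suc n) f = f 1 + (\<Sum>x\<in>{Suc 1..Suc n}. f x * s0 ^ (x - 1))"
    unfolding from_digits_def by (simp add: sum.atLeast_Suc_atMost)
  also have "(\<Sum>x\<in>{Suc 1..Suc n}. f x * s0 ^ (x - 1)) = (\<Sum>x\<in>{1..n}. s0 * (f (Suc x) * s0 ^ (x - 1)))"
    by (subst sum.shift_bounds_cl_Suc_ivl) (auto intro: sum.cong simp: power_eq_if)
  finally show ?thesis
    by (simp add: from_digits_def sum_distrib_left)
qed

lemma digit_lt: "0 < s0 \<Longrightarrow> digit s0 a x < s0"
  by (simp add: digit_def)

lemma digit_Suc: "1 \<le> x \<Longrightarrow> digit s0 a (Suc x) = digit s0 (a div s0) x"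
  by (cases x) (auto simp: digit_def div_mult2_eq mult.commute)

lemma from_digits_lt:
  assumes "\<forall>x\<in>{1..n}. f x < s0"
  shows "from_digits s0 n f < s0 ^ n"
  using assms
proof (induction n arbitrary: f)
  case 0
  then show ?case by (simp add: from_digits_def)
next
  case (Suc n)
  then have "from_digits s0 n (\<lambda>x. f (Suc x)) + 1 \<le> s0 ^ n"
    by (simp add: Suc_le_eq)
  then have "s0 * (from_digits s0 n (\<lambda>x. f (Suc x)) + 1) \<le> s0 * s0 ^ n"
    by (rule mult_le_mono2)
  moreover have "f 1 < s0"
    using Suc.prems by simp
  ultimately show ?case
    by (simp add: from_digits_Suc algebra_simps)
qed

lemma digit_from_digits:
  assumes "\<forall>x\<in>{1..n}. f x < s0" and "y \<in> {1..n}"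
  shows "digit s0 (from_digits s0 n f) y = f y"
  using assms
proof (induction n arbitrary: f y)
  case 0
  then show ?case by simp
next
  case (Suc n)
  show ?case
  proof (cases "y = 1")
    case True
    then show ?thesis
      using Suc.prems by (simp add: from_digits_Suc digit_def)
  next
    case False
    then obtain y' where y': "y = Suc y'" "y' \<in> {1..n}"
      using Suc.prems(2) by (cases y) auto
    have "f 1 < s0"
      using Suc.prems(1) by simp
    then have "digit s0 (from_digits s0 (Suc n) f) y = digit s0 (from_digits s0 n (\<lambda>x. f (Suc x))) y'"
      using y' by (simp add: from_digits_Suc digit_Suc)
    also have "\<dots> = f y"
      using Suc.IH[of "\<lambda>x. f (Suc x)" y'] Suc.prems y' by simp
    finally show ?thesis .
  qed
qed

lemma from_digits_digit: "a < s0 ^ n \<Longrightarrow> from_digits s0 n (digit s0 a) = a"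
proof (induction n arbitrary: a)
  case 0
  then show ?case by (simp add: from_digits_def)
next
  case (Suc n)
  then have "a div s0 < s0 ^ n"
    by (simp add: less_mult_imp_div_less mult.commute)
  moreover have "from_digits s0 n (\<lambda>x. digit s0 a (Suc x)) = from_digits s0 n (digit s0 (a div s0))"
    unfolding from_digits_def by (rule sum.cong) (auto simp: digit_Suc)
  ultimately have "from_digits s0 n (\<lambda>x. digit s0 a (Suc x)) = a div s0"
    using Suc.IH by simp
  then show ?case
    by (simp add: from_digits_Suc digit_def)
qed

lemma eq_if_digits_eq:
  assumes "a < s0 ^ n" and "b < s0 ^ n" and "\<forall>x\<in>{1..n}. digit s0 a x = digit s0 b x"
  shows "a = b"
proof -
  have "from_digits s0 n (digit s0 a) = from_digits s0 n (digit s0 b)"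
    unfolding from_digits_def using assms(3) by (intro sum.cong) auto
  then show ?thesis
    using assms(1,2) by (simp add: from_digits_digit)
qed

subsection \<open>Shifting the digits of a block\<close>

lemma inj_on_add_mod: "inj_on (\<lambda>v. (c + v) mod m) {..<m :: nat}"
proof (rule inj_onI)
  fix v w assume "v \<in> {..<m}" "w \<in> {..<m}" "(c + v) mod m = (c + w) mod m"
  then have "[v = w] (mod m)"
    by (simp add: cong_def[symmetric] cong_add_lcancel_nat)
  with \<open>v \<in> {..<m}\<close> \<open>w \<in> {..<m}\<close> show "v = w"
    by (simp add: cong_less_modulus_unique_nat)
qed

lemma shift_idx_eq_from_digits:
  "shift_idx s0 n a P v =
     from_digits s0 n (\<lambda>x. if x \<in> P then (digit s0 a x + v) mod s0 else digit s0 a x)"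
  by (simp add: shift_idx_def from_digits_def)

lemma shift_idx_lt: "0 < s0 \<Longrightarrow> shift_idx s0 n a P v < s0 ^ n"
  unfolding shift_idx_eq_from_digits by (rule from_digits_lt) (auto simp: digit_lt)

lemma digit_shift_idx:
  assumes "0 < s0" and "x \<in> {1..n}"
  shows "digit s0 (shift_idx s0 n a P v) x = (if x \<in> P then (digit s0 a x + v) mod s0 else digit s0 a x)"
  unfolding shift_idx_eq_from_digits using assms by (intro digit_from_digits) (auto simp: digit_lt)

lemma shift_idx_inverse:
  assumes "0 < s0" and "a < s0 ^ n" and "v \<le> s0"
  shows "shift_idx s0 n (shift_idx s0 n a P (s0 - v)) P v = a"
proof (rule eq_if_digits_eq[OF shift_idx_lt[OF assms(1)] assms(2)], rule ballI)
  fix x assume x: "x \<in> {1..n}"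
  have "((digit s0 a x + (s0 - v)) mod s0 + v) mod s0 = (digit s0 a x + s0) mod s0"
    using assms(3) by (simp add: mod_add_left_eq)
  also have "\<dots> = digit s0 a x"
    using digit_lt[OF assms(1)] by simp
  finally show "digit s0 (shift_idx s0 n (shift_idx s0 n a P (s0 - v)) P v) x = digit s0 a x"
    using x assms(1) by (simp add: digit_shift_idx)
qed

subsection \<open>Repair by summing parity checks over shifts\<close>

text \<open>\<open>omega_nth s0 i v\<close> is the \<open>v\<close>-th element of \<open>\<Omega>\<^sub>i = {0, \<dots>, s0 - 2, s0 - 2 + i}\<close>, for \<open>v < s0\<close>.\<close>
definition omega_nth :: "nat \<Rightarrow> nat \<Rightarrow> nat \<Rightarrow> nat" where
  "omega_nth s0 i v = (if v \<le> s0 - 2 then v else s0 - 2 + i)"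

lemma omega_nth_image:
  assumes "2 \<le> s0"
  shows "omega_nth s0 i ` {..<s0} = {0..s0 - 2} \<union> {s0 - 2 + i}"
proof -
  have "{..<s0} = insert (s0 - 1) {0..s0 - 2}"
    using assms by auto
  then show ?thesis
    using assms by (auto simp: omega_nth_def)
qed

lemma S_sym_eq_sum_omega_nth:
  assumes "2 \<le> s0"
  shows "S_sym s0 n P i c j a = (\<Sum>v<s0. c j (shift_idx s0 n a P v) (omega_nth s0 i v))"
proof -
  have "{..<s0} = insert (s0 - 1) {0..s0 - 2}"
    using assms by auto
  moreover have "(\<Sum>v\<in>{0..s0 - 2}. c j (shift_idx s0 n a P v) (omega_nth s0 i v))
               = (\<Sum>v\<in>{0..s0 - 2}. c j (shift_idx s0 n a P v) v)"
    by (rule sum.cong) (auto simp: omega_nth_def)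
  ultimately show ?thesis
    using assms by (simp add: S_sym_def omega_nth_def)
qed

lemma is_codeword_C3_diff:
  assumes "is_codeword_C3 n r s0 s lam c" and "is_codeword_C3 n r s0 s lam c'"
  shows "is_codeword_C3 n r s0 s lam (\<lambda>j a b. c j a b - c' j a b)"
  using assms by (simp add: is_codeword_C3_def right_diff_distrib sum_subtractf)

lemma S_sym_diff:
  "S_sym s0 n P i (\<lambda>j a b. c j a b - c' j a b) j a = S_sym s0 n P i c j a - S_sym s0 n P i c' j a"
  by (simp add: S_sym_def sum_subtractf)

lemma parity_checks_summed_over_shifts:
  fixes lam :: "nat \<Rightarrow> nat \<Rightarrow> 'f::field"
  assumes s0: "2 \<le> s0" and P: "P \<subseteq> {1..n}" and i: "s0 - 2 + i < s"
    and c: "is_codeword_C3 n r s0 s lam c" and a: "a < s0 ^ n" and k: "k < r"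
  shows "(\<Sum>j\<in>P. \<Sum>v<s0. lam j ((digit s0 a j + v) mod s0) ^ k
                            * c j (shift_idx s0 n a P v) (omega_nth s0 i v))
       + (\<Sum>j\<in>{1..n} - P. lam j (digit s0 a j) ^ k * S_sym s0 n P i c j a) = 0"
proof -
  have s0_pos: "0 < s0"
    using s0 by simp
  define g where "g j = (\<Sum>v<s0. lam j (digit s0 (shift_idx s0 n a P v) j) ^ k
                                    * c j (shift_idx s0 n a P v) (omega_nth s0 i v))" for j
  have "(\<Sum>j\<in>{1..n}. g j) = (\<Sum>v<s0. \<Sum>j\<in>{1..n}. lam j (digit s0 (shift_idx s0 n a P v) j) ^ k
                                        * c j (shift_idx s0 n a P v) (omega_nth s0 i v))"
    unfolding g_def by (rule sum.swap)
  also have "\<dots> = 0"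
  proof (rule sum.neutral, rule ballI)
    fix v assume "v \<in> {..<s0}"
    have "omega_nth s0 i v < s" and "Suc k \<in> {1..r}"
      using s0 i k by (auto simp: omega_nth_def)
    from c[unfolded is_codeword_C3_def, rule_format, OF shift_idx_lt[OF s0_pos] this]
    show "(\<Sum>j\<in>{1..n}. lam j (digit s0 (shift_idx s0 n a P v) j) ^ k
            * c j (shift_idx s0 n a P v) (omega_nth s0 i v)) = 0"
      by simp
  qed
  finally have "(\<Sum>j\<in>P. g j) + (\<Sum>j\<in>{1..n} - P. g j) = 0"
    using P by (simp add: sum.subset_diff add.commute)
  moreover have "(\<Sum>j\<in>P. g j) = (\<Sum>j\<in>P. \<Sum>v<s0. lam j ((digit s0 a j + v) mod s0) ^ k
                                      * c j (shift_idx s0 n a P v) (omega_nth s0 i v))"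
  proof (intro sum.cong refl)
    fix j assume "j \<in> P"
    then show "g j = (\<Sum>v<s0. lam j ((digit s0 a j + v) mod s0) ^ k
                       * c j (shift_idx s0 n a P v) (omega_nth s0 i v))"
      using P s0_pos unfolding g_def by (simp add: digit_shift_idx subset_iff)
  qed
  moreover have "(\<Sum>j\<in>{1..n} - P. g j) = (\<Sum>j\<in>{1..n} - P. lam j (digit s0 a j) ^ k * S_sym s0 n P i c j a)"
  proof (intro sum.cong refl)
    fix j assume "j \<in> {1..n} - P"
    then show "g j = lam j (digit s0 a j) ^ k * S_sym s0 n P i c j a"
      using s0 s0_pos unfolding g_def by (simp add: digit_shift_idx S_sym_eq_sum_omega_nth sum_distrib_left)
  qed
  ultimately show ?thesis
    by simp
qed

lemma repair_kernel_at:
  fixes lam :: "nat \<Rightarrow> nat \<Rightarrow> 'f::field"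
  assumes s0: "2 \<le> s0" and P: "P \<subseteq> {1..n}" and R: "R \<subseteq> {1..n} - P"
    and count: "card ({1..n} - P - R) + card P * s0 \<le> r"
    and lam: "inj_on (\<lambda>(j, w). lam j w) ({1..n} \<times> {0..s0 - 1})"
    and i: "s0 - 2 + i < s" and c: "is_codeword_C3 n r s0 s lam c"
    and a: "a < s0 ^ n" and SR: "\<forall>j\<in>R. S_sym s0 n P i c j a = 0"
  shows "\<forall>j\<in>P. \<forall>v<s0. c j (shift_idx s0 n a P v) (omega_nth s0 i v) = 0"
    and "\<forall>j\<in>{1..n} - P - R. S_sym s0 n P i c j a = 0"
proof -
  define Q where "Q = {1..n} - P - R"
  define N where "N = P \<times> {..<s0} \<union> Q \<times> {0}"
  define node where
    "node = (\<lambda>(j, v). (j, if j \<in> P then (digit s0 a j + v) mod s0 else digit s0 a j))"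
  define x where "x = (\<lambda>(j, w). lam j w) \<circ> node"
  define y where
    "y = (\<lambda>(j, v). if j \<in> P then c j (shift_idx s0 n a P v) (omega_nth s0 i v) else S_sym s0 n P i c j a)"
  have fin: "finite P" "finite Q" "finite R"
    using finite_subset[OF P] finite_subset[OF R] unfolding Q_def by auto
  have Q: "Q \<subseteq> {1..n}" "Q \<inter> P = {}" "{1..n} - P = Q \<union> R"
    unfolding Q_def using R by auto
  have disjoint: "P \<times> {..<s0} \<inter> Q \<times> {0} = {}"
    using Q(2) by auto
  have "card N = card P * s0 + card Q"
    unfolding N_def using fin disjoint by (simp add: card_Un_disjoint card_cartesian_product)
  then have card: "card N \<le> r"
    using count unfolding Q_def by simp
  have "inj_on node N"
  proof (rule inj_onI, clarify)
    fix j v j' v' assume "(j, v) \<in> N" "(j', v') \<in> N" "node (j, v) = node (j', v')"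
    then show "j = j' \<and> v = v'"
      using Q(2) inj_onD[OF inj_on_add_mod[of "digit s0 a j" s0], of v v']
      by (auto simp: N_def node_def split: if_splits)
  qed
  moreover have "node u \<in> {1..n} \<times> {0..s0 - 1}" if "u \<in> N" for u
  proof -
    obtain j v where u: "u = (j, v)"
      by fastforce
    have "digit s0 a j \<le> s0 - 1" "(digit s0 a j + v) mod s0 \<le> s0 - 1"
      using s0 digit_lt[of s0 a j] mod_less_divisor[of s0 "digit s0 a j + v"] by linarith+
    then show ?thesis
      using that P Q(1) by (auto simp: u N_def node_def)
  qed
  then have "inj_on (\<lambda>(j, w). lam j w) (node ` N)"
    by (intro inj_on_subset[OF lam]) blast
  ultimately have inj: "inj_on x N"
    unfolding x_def by (rule comp_inj_on)
  have sums: "\<forall>k<r. (\<Sum>u\<in>N. x u ^ k * y u) = 0"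
  proof (intro allI impI)
    fix k assume k: "k < r"
    have "(\<Sum>u\<in>N. x u ^ k * y u) = (\<Sum>u\<in>P \<times> {..<s0}. x u ^ k * y u) + (\<Sum>u\<in>Q \<times> {0}. x u ^ k * y u)"
      unfolding N_def using fin disjoint by (simp add: sum.union_disjoint)
    also have "(\<Sum>u\<in>P \<times> {..<s0}. x u ^ k * y u)
        = (\<Sum>j\<in>P. \<Sum>v<s0. lam j ((digit s0 a j + v) mod s0) ^ k
                              * c j (shift_idx s0 n a P v) (omega_nth s0 i v))"
      unfolding sum.cartesian_product' by (simp add: x_def y_def node_def)
    also have "(\<Sum>u\<in>Q \<times> {0}. x u ^ k * y u)
        = (\<Sum>j\<in>Q. lam j (digit s0 a j) ^ k * S_sym s0 n P i c j a)"
      unfolding sum.cartesian_product' using Q(2) by (intro sum.cong) (auto simp: x_def y_def node_def)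
    also have "\<dots> = (\<Sum>j\<in>{1..n} - P. lam j (digit s0 a j) ^ k * S_sym s0 n P i c j a)"
      using SR Q(3) fin by (intro sum.mono_neutral_left) auto
    finally show "(\<Sum>u\<in>N. x u ^ k * y u) = 0"
      using parity_checks_summed_over_shifts[OF s0 P i c a k] by simp
  qed
  have "finite N"
    unfolding N_def using fin by simp
  then have y: "y u = 0" if "u \<in> N" for u
    using card inj sums that by (rule power_sums_zero_imp_zero)
  show "\<forall>j\<in>P. \<forall>v<s0. c j (shift_idx s0 n a P v) (omega_nth s0 i v) = 0"
  proof (intro ballI allI impI)
    fix j v assume "j \<in> P" and "v < s0"
    then show "c j (shift_idx s0 n a P v) (omega_nth s0 i v) = 0"
      using y[of "(j, v)"] by (simp add: N_def y_def)
  qed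
  show "\<forall>j\<in>{1..n} - P - R. S_sym s0 n P i c j a = 0"
  proof
    fix j assume "j \<in> {1..n} - P - R"
    then have "(j, 0) \<in> N" and "j \<notin> P"
      unfolding N_def Q_def by auto
    then show "S_sym s0 n P i c j a = 0"
      using y[of "(j, 0)"] by (simp add: y_def)
  qed
qed

lemma repair_kernel:
  fixes lam :: "nat \<Rightarrow> nat \<Rightarrow> 'f::field"
  assumes s0: "2 \<le> s0" and P: "P \<subseteq> {1..n}" and R: "R \<subseteq> {1..n} - P"
    and count: "card ({1..n} - P - R) + card P * s0 \<le> r"
    and lam: "inj_on (\<lambda>(j, w). lam j w) ({1..n} \<times> {0..s0 - 1})"
    and i: "s0 - 2 + i < s" and c: "is_codeword_C3 n r s0 s lam c"
    and SR: "\<forall>j\<in>R. \<forall>a < s0 ^ n. S_sym s0 n P i c j a = 0"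
  shows "\<forall>j\<in>P. \<forall>a < s0 ^ n. \<forall>b \<in> {0..s0 - 2} \<union> {s0 - 2 + i}. c j a b = 0"
    and "\<forall>j\<in>{1..n} - P - R. \<forall>a < s0 ^ n. S_sym s0 n P i c j a = 0"
proof -
  note kernel_at = repair_kernel_at[OF s0 P R count lam i c]
  show "\<forall>j\<in>{1..n} - P - R. \<forall>a < s0 ^ n. S_sym s0 n P i c j a = 0"
    using kernel_at(2) SR by blast
  show "\<forall>j\<in>P. \<forall>a < s0 ^ n. \<forall>b \<in> {0..s0 - 2} \<union> {s0 - 2 + i}. c j a b = 0"
  proof (intro ballI allI impI)
    fix j a b assume j: "j \<in> P" and a: "a < s0 ^ n" and b: "b \<in> {0..s0 - 2} \<union> {s0 - 2 + i}"
    obtain v where v: "v < s0" "omega_nth s0 i v = b"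
      using b omega_nth_image[OF s0] by (metis imageE lessThan_iff)
    have s0_pos: "0 < s0"
      using s0 by simp
    define a' where "a' = shift_idx s0 n a P (s0 - v)"
    have "shift_idx s0 n a' P v = a"
      unfolding a'_def using s0_pos a v(1) by (simp add: shift_idx_inverse)
    moreover have "\<forall>j\<in>R. S_sym s0 n P i c j a' = 0"
      using SR shift_idx_lt[OF s0_pos] unfolding a'_def by blast
    ultimately show "c j a b = 0"
      using kernel_at(1)[OF shift_idx_lt[OF s0_pos]] j v unfolding a'_def by metis
  qed
qed

lemma C3_parameters:
  fixes h d k :: nat
  assumes "2 \<le> h" and "k < d" and \<delta>_def: "\<delta> = gcd h (d - k)"
    and s0_def: "s0 = (d - k + \<delta>) div \<delta>" and s_def: "s = (d - k + h) div \<delta>"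
    and "i \<in> {1..h div \<delta>}"
  shows "\<delta> \<le> h" and "\<delta> * s0 = d - k + \<delta>" and "2 \<le> s0" and "s0 - 2 + i < s"
proof -
  have "0 < \<delta>"
    unfolding \<delta>_def using assms(1) by simp
  obtain m where m: "d - k = m * \<delta>"
    unfolding \<delta>_def by (metis dvd_def gcd_dvd2 mult.commute)
  obtain q where q: "h = q * \<delta>"
    unfolding \<delta>_def by (metis dvd_def gcd_dvd1 mult.commute)
  have "1 \<le> m"
    using m assms(2) by (cases m) auto
  have s0: "s0 = m + 1" and s: "s = m + q"
    unfolding s0_def s_def m q using \<open>0 < \<delta>\<close> by (simp_all add: add_mult_distrib[symmetric])
  have "i \<le> q"
    using assms(6) q \<open>0 < \<delta>\<close> by simp
  show "\<delta> \<le> h"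
    unfolding \<delta>_def using assms(1) by (simp add: gcd_le1_nat)
  show "\<delta> * s0 = d - k + \<delta>"
    unfolding s0 m by (simp add: algebra_simps)
  show "2 \<le> s0" and "s0 - 2 + i < s"
    using s0 s \<open>1 \<le> m\<close> \<open>i \<le> q\<close> by auto
qed

theorem lemma1:
  fixes n k h d :: nat
    and lam :: "nat \<Rightarrow> nat \<Rightarrow> 'f::{field,finite}"
    and H R :: "nat set"
    and P :: "nat \<Rightarrow> nat set"
  defines "r \<equiv> n - k"
      and "\<delta> \<equiv> gcd h (d - k)"
  defines "s0 \<equiv> (d - k + \<delta>) div \<delta>"
      and "s \<equiv> (d - k + h) div \<delta>"
  assumes "n > k" and "k \<ge> 1"
    and "2 \<le> h" and "h \<le> n - k"
    and "k < d" and "d \<le> n - h"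
    and "card (UNIV :: 'f set) \<ge> s0 * n"
    and "inj_on (\<lambda>(i, j). lam i j) ({1..n} \<times> {0..s0 - 1})"
    and "H \<subseteq> {1..n}" and "card H = h"
    and "R \<subseteq> {1..n} - H" and "card R = d"
    and "\<forall>i\<in>{1..h div \<delta>}. P i \<subseteq> H \<and> card (P i) = \<delta>"
    and "\<forall>i\<in>{1..h div \<delta>}. \<forall>i'\<in>{1..h div \<delta>}. i \<noteq> i' \<longrightarrow> P i \<inter> P i' = {}"
    and "(\<Union>i\<in>{1..h div \<delta>}. P i) = H"
    and "i \<in> {1..h div \<delta>}"
    and "is_codeword_C3 n r s0 s lam c"
    and "is_codeword_C3 n r s0 s lam c'"
    and "\<forall>j\<in>R. \<forall>a < s0 ^ n. S_sym s0 n (P i) i c j a = S_sym s0 n (P i) i c' j a"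
  shows "(\<forall>j\<in>P i. \<forall>a < s0 ^ n. \<forall>b \<in> {0..s0 - 2} \<union> {s0 - 2 + i}. c j a b = c' j a b)
       \<and> (\<forall>j\<in>H - P i. \<forall>a < s0 ^ n. S_sym s0 n (P i) i c j a = S_sym s0 n (P i) i c' j a)"
proof -
  note params = C3_parameters[OF assms(7,9) \<delta>_def[THEN meta_eq_to_obj_eq] s0_def[THEN meta_eq_to_obj_eq]
      s_def[THEN meta_eq_to_obj_eq] assms(20)]
  have "P i \<subseteq> H" and P_card: "card (P i) = \<delta>"
    using assms(17,20) by auto
  then have P: "P i \<subseteq> {1..n}" and R: "R \<subseteq> {1..n} - P i"
    using assms(13,15) by auto
  have "card ({1..n} - P i - R) = n - \<delta> - d"
    using P P_card R assms(16) by (simp add: card_Diff_subset finite_subset)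
  then have count: "card ({1..n} - P i - R) + card (P i) * s0 \<le> r"
    using params(1,2) P_card assms(9,10) unfolding r_def by (simp add: mult.commute)
  have "\<forall>j\<in>R. \<forall>a < s0 ^ n. S_sym s0 n (P i) i (\<lambda>j a b. c j a b - c' j a b) j a = 0"
    using assms(23) by (simp add: S_sym_diff)
  note kernel = repair_kernel[OF params(3) P R count assms(12) params(4)
      is_codeword_C3_diff[OF assms(21,22)] this]
  have "H - P i \<subseteq> {1..n} - P i - R"
    using assms(13,15) by blast
  then show ?thesis
    using kernel by (simp add: S_sym_diff subset_iff)
qed

end
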